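(* Let $\overline p$ be a Goresky–MacPherson perversity, let $X$ be an $n$-dimensional filtered space without strata of codimension $1$, and let $x_0$ be a regular point of $X$. Let $$\ell_{\overline p}=\sup\{k\in\overline{\mathbb N}\mid \overline p(k)=\overline t(k)\}=\sup\{k\in\overline{\mathbb N}\mid D\overline p(k)=0\},$$ called the cleaving point of $\overline p$. Then $$\pi_1^{\overline p}(X,x_0)=\pi_1^{\overline t}(X\setminus X_{n-\ell_{\overline p}-1},x_0).$$ Here $X\setminus X_{n-\ell_{\overline p}-1}$ carries the induced filtration and $X_m=\emptyset$ for $m\le-1$.
   Context: Filtered spaces. A filtered space of formal dimension $n$ is a nonempty space $X$ with closed subsets $\emptyset=X_{-1}\subseteq\cdots\subseteq X_{n-1}\subsetneq X_n=X$. Strata are the nonempty connected components of $X_i\setminus X_{i-1}$, with codimension $n-i$. Strata in $X\setminus X_{n-1}$ are regular. An open subset $U$ has the induced filtration $U\cap X_i$. Perversities. A GM perversity is a map $\overline p\colon\{2,3,\dots\}\to\mathbb N$ with $\overline p(2)=0$ and $\overline p(i)\le\overline p(i+1)\le\overline p(i)+1$. On a filtered space without codimension-one strata, it assigns $\overline p(\operatorname{codim}S)$ to each singular stratum $S$ and $0$ to regular strata. The top perversity is $\overline t(k)=k-2$, and $D\overline p(k)=k-2-\overline p(k)$. Full simplices and intersection homotopy groups. A simplex $\sigma\colon\Delta^j\to X$ is $\overline p$-allowable if $\dim\sigma^{-1}S\le j-\operatorname{codim}S+\overline p(S)$ for each singular stratum $S$. Here $\dim$ is polyhedral dimension, i.e.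 the minimal dimension of a polyhedron containing the set, with $\dim\emptyset=-\infty$. A simplex is $\overline p$-full if it and all iterated faces are allowable. The $\overline p$-full simplices form a Kan simplicial subset $\mathscr G_{\overline p}X\subseteq\mathrm{Sing}\,X$, and $\pi_1^{\overline p}(X,x_0)=\pi_1(\mathscr G_{\overline p}X,x_0)$. *)

theory Defs
  imports "HOL-Homology.Homology" "HOL-Library.Extended_Nat"
begin

text \<open>A filtered space of formal dimension n: the filtration is given as a map
  F :: int => 'a set with F i = {} for i <= -1 and F i = topspace X for i >= n
  (so that X_m = {} for m <= -1, as in the paper).\<close>

definition filtered_space :: "'a topology \<Rightarrow> nat \<Rightarrow> (int \<Rightarrow> 'a set) \<Rightarrow> bool" where
  "filtered_space X n F \<longleftrightarrow>
     topspace X \<noteq> {} \<and>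
     (\<forall>i. closedin X (F i)) \<and>
     (\<forall>i. F i \<subseteq> F (i + 1)) \<and>
     (\<forall>i<0. F i = {}) \<and>
     (\<forall>i\<ge>int n. F i = topspace X) \<and>
     F (int n - 1) \<noteq> topspace X"

text \<open>S is a stratum of the filtered space lying in F i - F (i-1), 0 <= i <= n
  (its codimension is n - i).\<close>

definition stratum_at :: "'a topology \<Rightarrow> nat \<Rightarrow> (int \<Rightarrow> 'a set) \<Rightarrow> int \<Rightarrow> 'a set \<Rightarrow> bool" where
  "stratum_at X n F i S \<longleftrightarrow>
     0 \<le> i \<and> i \<le> int n \<and> S \<in> connected_components_of (subtopology X (F i - F (i - 1)))"

definition no_codim_one_strata :: "'a topology \<Rightarrow> nat \<Rightarrow> (int \<Rightarrow> 'a set) \<Rightarrow> bool" where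
  "no_codim_one_strata X n F \<longleftrightarrow> \<not> (\<exists>S. stratum_at X n F (int n - 1) S)"

definition regular_point :: "'a topology \<Rightarrow> nat \<Rightarrow> (int \<Rightarrow> 'a set) \<Rightarrow> 'a \<Rightarrow> bool" where
  "regular_point X n F x \<longleftrightarrow> x \<in> topspace X - F (int n - 1)"

definition gm_perversity :: "(nat \<Rightarrow> nat) \<Rightarrow> bool" where
  "gm_perversity p \<longleftrightarrow> p 2 = 0 \<and> (\<forall>i\<ge>2. p i \<le> p (i + 1) \<and> p (i + 1) \<le> p i + 1)"

definition top_perversity :: "nat \<Rightarrow> nat" where
  "top_perversity k = k - 2"

definition dual_perversity :: "(nat \<Rightarrow> nat) \<Rightarrow> nat \<Rightarrow> nat" where
  "dual_perversity p k = k - 2 - p k"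

definition cleaving_point :: "(nat \<Rightarrow> nat) \<Rightarrow> enat" where
  "cleaving_point p = Sup {enat k | k. 2 \<le> k \<and> p k = top_perversity k}"

text \<open>The ambient space nat => real of the standard simplices is not a real_vector
  instance in the library, so convex hulls and affine independence are written out.\<close>

definition conv_hull_pts :: "(nat \<Rightarrow> real) set \<Rightarrow> (nat \<Rightarrow> real) set" where
  "conv_hull_pts T = {x. \<exists>u. (\<forall>v\<in>T. 0 \<le> u v) \<and> (\<Sum>v\<in>T. u v) = 1 \<and>
                          x = (\<lambda>i. \<Sum>v\<in>T. u v * v i)}"

definition aff_indep_pts :: "(nat \<Rightarrow> real) set \<Rightarrow> bool" where
  "aff_indep_pts T \<longleftrightarrow> (\<forall>u. (\<Sum>v\<in>T. u v) = 0 \<and> (\<lambda>i. \<Sum>v\<in>T. u v * v i) = (\<lambda>i. 0)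
                           \<longrightarrow> (\<forall>v\<in>T. u v = 0))"

text \<open>polydim_le A k: A is contained in a (compact) polyhedron of dimension <= k,
  i.e. a finite union of geometric simplices of dimension <= k. For k < 0 this
  forces A = {} (dim {} = -infinity).\<close>

definition polydim_le :: "(nat \<Rightarrow> real) set \<Rightarrow> int \<Rightarrow> bool" where
  "polydim_le A k \<longleftrightarrow>
     (\<exists>\<F>. finite \<F> \<and> A \<subseteq> \<Union>\<F> \<and>
        (\<forall>P\<in>\<F>. \<exists>T. finite T \<and> aff_indep_pts T \<and> int (card T) \<le> k + 1 \<and> P = conv_hull_pts T))"

definition allowable_simplex ::
  "'a topology \<Rightarrow> nat \<Rightarrow> (int \<Rightarrow> 'a set) \<Rightarrow> (nat \<Rightarrow> nat) \<Rightarrow> nat \<Rightarrow> ((nat \<Rightarrow> real) \<Rightarrow> 'a) \<Rightarrow> bool" where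
  "allowable_simplex X n F p j \<sigma> \<longleftrightarrow>
     singular_simplex j X \<sigma> \<and>
     (\<forall>i S. stratum_at X n F i S \<and> i < int n \<longrightarrow>
        polydim_le {x \<in> standard_simplex j. \<sigma> x \<in> S}
                   (int j - (int n - i) + int (p (nat (int n - i)))))"

fun full_simplex ::
  "'a topology \<Rightarrow> nat \<Rightarrow> (int \<Rightarrow> 'a set) \<Rightarrow> (nat \<Rightarrow> nat) \<Rightarrow> nat \<Rightarrow> ((nat \<Rightarrow> real) \<Rightarrow> 'a) \<Rightarrow> bool" where
  "full_simplex X n F p 0 \<sigma> = allowable_simplex X n F p 0 \<sigma>"
| "full_simplex X n F p (Suc j) \<sigma> =
     (allowable_simplex X n F p (Suc j) \<sigma> \<and>
      (\<forall>k\<le>Suc j. full_simplex X n F p j (singular_face (Suc j) k \<sigma>)))"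

definition const_simplex :: "nat \<Rightarrow> 'a \<Rightarrow> (nat \<Rightarrow> real) \<Rightarrow> 'a" where
  "const_simplex j x0 = restrict (\<lambda>_. x0) (standard_simplex j)"

definition full_loop ::
  "'a topology \<Rightarrow> nat \<Rightarrow> (int \<Rightarrow> 'a set) \<Rightarrow> (nat \<Rightarrow> nat) \<Rightarrow> 'a \<Rightarrow> ((nat \<Rightarrow> real) \<Rightarrow> 'a) \<Rightarrow> bool" where
  "full_loop X n F p x0 \<sigma> \<longleftrightarrow>
     full_simplex X n F p 1 \<sigma> \<and>
     singular_face 1 0 \<sigma> = const_simplex 0 x0 \<and> singular_face 1 1 \<sigma> = const_simplex 0 x0"

text \<open>Homotopy of loops in the Kan complex: sigma ~ tau iff there is a full 2-simplex
  w with d2 w = sigma, d1 w = tau, d0 w = s0 x0 (the degenerate 1-simplex at x0).\<close>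

definition full_loop_rel ::
  "'a topology \<Rightarrow> nat \<Rightarrow> (int \<Rightarrow> 'a set) \<Rightarrow> (nat \<Rightarrow> nat) \<Rightarrow> 'a \<Rightarrow>
   ((nat \<Rightarrow> real) \<Rightarrow> 'a) \<Rightarrow> ((nat \<Rightarrow> real) \<Rightarrow> 'a) \<Rightarrow> bool" where
  "full_loop_rel X n F p x0 \<sigma> \<tau> \<longleftrightarrow>
     (\<exists>\<omega>. full_simplex X n F p 2 \<omega> \<and>
          singular_face 2 2 \<omega> = \<sigma> \<and> singular_face 2 1 \<omega> = \<tau> \<and>
          singular_face 2 0 \<omega> = const_simplex 1 x0)"

definition full_loop_class ::
  "'a topology \<Rightarrow> nat \<Rightarrow> (int \<Rightarrow> 'a set) \<Rightarrow> (nat \<Rightarrow> nat) \<Rightarrow> 'a \<Rightarrow>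
   ((nat \<Rightarrow> real) \<Rightarrow> 'a) \<Rightarrow> ((nat \<Rightarrow> real) \<Rightarrow> 'a) set" where
  "full_loop_class X n F p x0 \<sigma> = {\<tau>. full_loop X n F p x0 \<tau> \<and> full_loop_rel X n F p x0 \<sigma> \<tau>}"

text \<open>The intersection fundamental group pi_1^p(X,x0) = pi_1(G_p X, x0), with the
  standard group law of a Kan complex: [sigma][tau] = [d1 w] for a full 2-simplex w
  with d2 w = sigma, d0 w = tau.\<close>

definition intersection_pi1 ::
  "'a topology \<Rightarrow> nat \<Rightarrow> (int \<Rightarrow> 'a set) \<Rightarrow> (nat \<Rightarrow> nat) \<Rightarrow> 'a \<Rightarrow>
   (((nat \<Rightarrow> real) \<Rightarrow> 'a) set) monoid" where
  "intersection_pi1 X n F p x0 =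
     \<lparr>carrier = full_loop_class X n F p x0 ` Collect (full_loop X n F p x0),
      monoid.mult = (\<lambda>A B. full_loop_class X n F p x0
         (singular_face 2 1 (SOME \<omega>. full_simplex X n F p 2 \<omega> \<and>
              singular_face 2 2 \<omega> \<in> A \<and> singular_face 2 0 \<omega> \<in> B))),
      one = full_loop_class X n F p x0 (const_simplex 1 x0)\<rparr>"

definition cleaved_open :: "'a topology \<Rightarrow> nat \<Rightarrow> (int \<Rightarrow> 'a set) \<Rightarrow> (nat \<Rightarrow> nat) \<Rightarrow> 'a set" where
  "cleaved_open X n F p =
     topspace X - (case cleaving_point p of enat l \<Rightarrow> F (int n - int l - 1) | \<infinity> \<Rightarrow> {})"

end

theory Submission imports Defs begin

text \<open>On the strata of codimension k beyond the cleaving point a GM perversity satisfies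
  p(k) \<le> k - 3, so a simplex of dimension at most 2 that is p-allowable cannot meet them,
  while on the remaining strata p agrees with the top perversity. Hence the p-full simplices
  of dimension \<le> 2 of X are exactly the t-full simplices of the open subset
  X - X_{n - l_p - 1}, and the two fundamental groups, being built from these simplices
  only, coincide.\<close>

lemma gm_perversity_Suc_le:
  assumes "gm_perversity p" "2 \<le> k"
  shows "p (Suc k) \<le> p k + 1"
  using assms unfolding gm_perversity_def by (metis Suc_eq_plus1)

lemma gm_perversity_le_top:
  assumes "gm_perversity p" "2 \<le> k"
  shows "p k \<le> top_perversity k"
  using assms(2)
proof (induction k rule: dec_induct)
  case base
  then show ?case using assms(1) by (simp add: gm_perversity_def top_perversity_def)
next
  case (step m)
  then show ?case
    using gm_perversity_Suc_le[OF assms(1) step(1)] by (simp add: top_perversity_def)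
qed

text \<open>p gains at most one per step while t gains exactly one.\<close>

lemma gm_perversity_eq_top_downward:
  assumes "gm_perversity p" "2 \<le> k" "k \<le> m" "p m = top_perversity m"
  shows "p k = top_perversity k"
  using assms(3,4)
proof (induction m rule: dec_induct)
  case base
  then show ?case .
next
  case (step m)
  have "2 \<le> m" using step(1) assms(2) by linarith
  then have "p m = top_perversity m"
    using gm_perversity_Suc_le[OF assms(1)] gm_perversity_le_top[OF assms(1)] step(4)
    by (fastforce simp: top_perversity_def)
  then show ?case using step(3) by blast
qed

lemma gm_perversity_eq_top_iff_le_cleaving_point:
  assumes "gm_perversity p" "2 \<le> k"
  shows "p k = top_perversity k \<longleftrightarrow> enat k \<le> cleaving_point p"
proof
  assume "p k = top_perversity k"
  then show "enat k \<le> cleaving_point p"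
    unfolding cleaving_point_def using assms(2) by (blast intro: Sup_upper)
next
  assume le: "enat k \<le> cleaving_point p"
  show "p k = top_perversity k"
  proof (rule ccontr)
    assume ne: "p k \<noteq> top_perversity k"
    have "cleaving_point p \<le> enat (k - 1)"
      unfolding cleaving_point_def
    proof (rule Sup_least)
      fix x assume "x \<in> {enat m |m. 2 \<le> m \<and> p m = top_perversity m}"
      then obtain m where m: "x = enat m" "2 \<le> m" "p m = top_perversity m" by blast
      have "m < k"
        using gm_perversity_eq_top_downward[OF assms, of m] m(3) ne by force
      then show "x \<le> enat (k - 1)" using m(1) by simp
    qed
    with le have "enat k \<le> enat (k - 1)" by (rule order.trans)
    then show False using assms(2) by simp
  qed
qed

lemma gm_perversity_below_top:
  assumes "gm_perversity p" "2 \<le> k" "p k \<noteq> top_perversity k"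
  shows "p k + 3 \<le> k"
proof -
  have "k \<noteq> 2" using assms by (auto simp: gm_perversity_def top_perversity_def)
  then show ?thesis
    using gm_perversity_le_top[OF assms(1,2)] assms(2,3) by (simp add: top_perversity_def)
qed

lemma polydim_le_empty: "polydim_le {} k"
  unfolding polydim_le_def by (rule exI[of _ "{}"]) simp

lemma conv_hull_pts_empty: "conv_hull_pts {} = {}"
  unfolding conv_hull_pts_def by simp

lemma polydim_le_negative_imp_empty:
  assumes "polydim_le A k" "k < 0"
  shows "A = {}"
proof -
  obtain \<F> where cover: "A \<subseteq> \<Union>\<F>" and simplices: "\<And>P. P \<in> \<F> \<Longrightarrow>
      \<exists>T. finite T \<and> aff_indep_pts T \<and> int (card T) \<le> k + 1 \<and> P = conv_hull_pts T"
    using assms(1) unfolding polydim_le_def by auto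
  have "P = {}" if P: "P \<in> \<F>" for P
  proof -
    obtain T where T: "finite T" "int (card T) \<le> k + 1" "P = conv_hull_pts T"
      using simplices[OF P] by auto
    then have "card T = 0" using assms(2) by linarith
    then have "T = {}" using T(1) by simp
    then show ?thesis using T(3) conv_hull_pts_empty by simp
  qed
  then show ?thesis using cover by blast
qed

lemma filtered_space_mono:
  assumes "filtered_space X n F" "i \<le> j"
  shows "F i \<subseteq> F j"
proof -
  have step: "F k \<subseteq> F (k + 1)" for k
    using assms(1) unfolding filtered_space_def by blast
  have "F i \<subseteq> F (i + int m)" for m
  proof (induction m)
    case (Suc m)
    have "i + int (Suc m) = i + int m + 1" by simp
    then show ?case using Suc step[of "i + int m"] by (metis order_trans)
  qed simp
  from this[of "nat (j - i)"] show ?thesis using assms(2) by simp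
qed

lemma filtered_space_subset_topspace:
  assumes "filtered_space X n F"
  shows "F i \<subseteq> topspace X"
  using assms closedin_subset unfolding filtered_space_def by blast

lemma filtered_space_point_in_stratum:
  assumes "filtered_space X n F" "y \<in> F m"
  shows "\<exists>i S. i \<le> m \<and> stratum_at X n F i S \<and> y \<in> S"
proof -
  have neg: "F i = {}" if "i < 0" for i
    using assms(1) that unfolding filtered_space_def by blast
  have "F (int n) = topspace X" using assms(1) unfolding filtered_space_def by simp
  then have ytop: "y \<in> F (int n)" using assms(2) filtered_space_subset_topspace[OF assms(1)] by blast
  have "0 \<le> m" using assms(2) neg[of m] by (metis empty_iff linorder_not_le)
  then have ym: "y \<in> F (int (nat m))" using assms(2) by simp
  define P where "P i \<longleftrightarrow> y \<in> F (int i)" for i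
  define i where "i = (LEAST i. P i)"
  have yi: "y \<in> F (int i)" using LeastI[of P, OF ym[folded P_def]] unfolding i_def P_def .
  have "i \<le> nat m" unfolding i_def using ym[folded P_def] by (rule Least_le)
  have "i \<le> n" unfolding i_def using ytop[folded P_def] by (rule Least_le)
  have "y \<notin> F (int i - 1)"
  proof (cases i)
    case (Suc i')
    then show ?thesis using not_less_Least[of i' P] unfolding i_def P_def by simp
  qed (simp add: neg)
  then have yin: "y \<in> topspace (subtopology X (F (int i) - F (int i - 1)))"
    using yi filtered_space_subset_topspace[OF assms(1)] by (simp add: subset_iff)
  let ?S = "connected_component_of_set (subtopology X (F (int i) - F (int i - 1))) y"
  have "?S \<in> connected_components_of (subtopology X (F (int i) - F (int i - 1)))"
    using yin by (simp add: connected_component_in_connected_components_of)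
  then have "stratum_at X n F (int i) ?S" unfolding stratum_at_def using \<open>i \<le> n\<close> by simp
  moreover have "y \<in> ?S" using yin by (simp add: connected_component_of_refl)
  moreover have "int i \<le> m" using \<open>i \<le> nat m\<close> \<open>0 \<le> m\<close> by (simp add: le_nat_iff)
  ultimately show ?thesis by blast
qed

lemma stratum_at_codim_ge_two:
  assumes "no_codim_one_strata X n F" "stratum_at X n F i S" "i < int n"
  shows "2 \<le> int n - i"
proof -
  have "i \<noteq> int n - 1" using assms(1,2) unfolding no_codim_one_strata_def by blast
  then show ?thesis using assms(3) by linarith
qed

lemma stratum_at_complement_iff:
  assumes "filtered_space X n F"
  shows "stratum_at (subtopology X (topspace X - F c)) n (\<lambda>i. (topspace X - F c) \<inter> F i) i S
         \<longleftrightarrow> stratum_at X n F i S \<and> c < i"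
proof -
  let ?U = "topspace X - F c"
  have sub: "subtopology (subtopology X ?U) (?U \<inter> F i - ?U \<inter> F (i - 1))
             = subtopology X (?U \<inter> (F i - F (i - 1)))"
    unfolding subtopology_subtopology by (rule arg_cong[where f = "subtopology X"]) blast
  have above: "?U \<inter> (F i - F (i - 1)) = F i - F (i - 1)" if "c < i"
    using filtered_space_mono[OF assms, of c "i - 1"] filtered_space_subset_topspace[OF assms] that
    by auto
  have below: "?U \<inter> F i = {}" if "\<not> c < i"
    using filtered_space_mono[OF assms, of i c] that by auto
  show ?thesis
  proof (cases "c < i")
    case False
    have "S \<noteq> {}" "S \<subseteq> ?U \<inter> F i"
      if "S \<in> connected_components_of (subtopology X (?U \<inter> (F i - F (i - 1))))"
      using that nonempty_connected_components_of connected_components_of_subset by fastforce+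
    then show ?thesis using False below[OF False] unfolding stratum_at_def sub by blast
  qed (simp add: stratum_at_def sub above)
qed

text \<open>The hypothesis on the strata inside F c makes their allowability bound negative.\<close>

lemma allowable_simplex_image_subset_complement:
  assumes X: "filtered_space X n F" and "c < int n"
    and deep: "\<And>i S. stratum_at X n F i S \<Longrightarrow> i \<le> c \<Longrightarrow>
                 int j + int (p (nat (int n - i))) < int n - i"
    and "allowable_simplex X n F p j \<sigma>"
  shows "\<sigma> ` standard_simplex j \<subseteq> topspace X - F c"
proof
  fix y assume "y \<in> \<sigma> ` standard_simplex j"
  then obtain x where x: "x \<in> standard_simplex j" "y = \<sigma> x" by blast
  have "y \<in> topspace X"
    using assms(4) x continuous_map_image_subset_topspace topspace_standard_simplex
    unfolding allowable_simplex_def singular_simplex_def by blast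
  moreover have "y \<notin> F c"
  proof
    assume "y \<in> F c"
    then obtain i S where S: "i \<le> c" "stratum_at X n F i S" "y \<in> S"
      using filtered_space_point_in_stratum[OF X] by blast
    have "i < int n" using S(1) assms(2) by linarith
    then have "polydim_le {x \<in> standard_simplex j. \<sigma> x \<in> S}
                (int j - (int n - i) + int (p (nat (int n - i))))"
      using assms(4) S(2) unfolding allowable_simplex_def by blast
    moreover have "int j - (int n - i) + int (p (nat (int n - i))) < 0"
      using deep[OF S(2,1)] by linarith
    ultimately have "{x \<in> standard_simplex j. \<sigma> x \<in> S} = {}"
      by (rule polydim_le_negative_imp_empty)
    then show False using x S(3) by blast
  qed
  ultimately show "y \<in> topspace X - F c" by blast
qed

lemma allowable_simplex_complement_iff:
  assumes X: "filtered_space X n F" and "c < int n"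
    and deep: "\<And>i S. stratum_at X n F i S \<Longrightarrow> i \<le> c \<Longrightarrow>
                 int j + int (p (nat (int n - i))) < int n - i"
    and agree: "\<And>i S. stratum_at X n F i S \<Longrightarrow> c < i \<Longrightarrow> i < int n \<Longrightarrow>
                 q (nat (int n - i)) = p (nat (int n - i))"
  shows "allowable_simplex X n F p j \<sigma> \<longleftrightarrow>
         allowable_simplex (subtopology X (topspace X - F c)) n
           (\<lambda>i. (topspace X - F c) \<inter> F i) q j \<sigma>"
    (is "?allowed \<longleftrightarrow> allowable_simplex ?Y n ?G q j \<sigma>")
proof
  assume allowed: ?allowed
  have "\<sigma> ` standard_simplex j \<subseteq> topspace X - F c"
    using X assms(2) deep allowed by (rule allowable_simplex_image_subset_complement)
  then have "singular_simplex j ?Y \<sigma>"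
    using allowed unfolding allowable_simplex_def singular_simplex_subtopology by blast
  moreover have "polydim_le {x \<in> standard_simplex j. \<sigma> x \<in> S}
          (int j - (int n - i) + int (q (nat (int n - i))))"
    if S: "stratum_at ?Y n ?G i S" "i < int n" for i S
  proof -
    have "stratum_at X n F i S" "c < i" using S(1) stratum_at_complement_iff[OF X] by blast+
    then show ?thesis using allowed agree S(2) unfolding allowable_simplex_def by simp
  qed
  ultimately show "allowable_simplex ?Y n ?G q j \<sigma>" unfolding allowable_simplex_def by blast
next
  assume Y: "allowable_simplex ?Y n ?G q j \<sigma>"
  then have image: "\<sigma> ` standard_simplex j \<subseteq> topspace X - F c"
    unfolding allowable_simplex_def singular_simplex_subtopology by blast
  have "polydim_le {x \<in> standard_simplex j. \<sigma> x \<in> S}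
          (int j - (int n - i) + int (p (nat (int n - i))))"
    if S: "stratum_at X n F i S" "i < int n" for i S
  proof (cases "c < i")
    case True
    then have "stratum_at ?Y n ?G i S" using S(1) stratum_at_complement_iff[OF X] by blast
    then have "polydim_le {x \<in> standard_simplex j. \<sigma> x \<in> S}
                (int j - (int n - i) + int (q (nat (int n - i))))"
      using Y S(2) unfolding allowable_simplex_def by blast
    then show ?thesis using agree[OF S(1) True S(2)] by simp
  next
    case False
    have "S \<subseteq> F c"
      using S(1) False connected_components_of_subset filtered_space_mono[OF X, of i c]
      unfolding stratum_at_def by fastforce
    then have "{x \<in> standard_simplex j. \<sigma> x \<in> S} = {}" using image by blast
    then show ?thesis by (simp only: polydim_le_empty)
  qed
  then show ?allowed
    using Y unfolding allowable_simplex_def singular_simplex_subtopology by blast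
qed

lemma full_simplex_complement_iff:
  assumes X: "filtered_space X n F" and "c < int n"
    and deep: "\<And>i S. stratum_at X n F i S \<Longrightarrow> i \<le> c \<Longrightarrow>
                 int j + int (p (nat (int n - i))) < int n - i"
    and agree: "\<And>i S. stratum_at X n F i S \<Longrightarrow> c < i \<Longrightarrow> i < int n \<Longrightarrow>
                 q (nat (int n - i)) = p (nat (int n - i))"
  shows "full_simplex X n F p j \<sigma> \<longleftrightarrow>
         full_simplex (subtopology X (topspace X - F c)) n
           (\<lambda>i. (topspace X - F c) \<inter> F i) q j \<sigma>"
  using deep
proof (induction j arbitrary: \<sigma>)
  case 0
  have "allowable_simplex X n F p 0 \<sigma> \<longleftrightarrow>
        allowable_simplex (subtopology X (topspace X - F c)) n (\<lambda>i. (topspace X - F c) \<inter> F i) q 0 \<sigma>"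
    using X assms(2) "0.prems" agree by (rule allowable_simplex_complement_iff)
  then show ?case by simp
next
  case (Suc j)
  have deep_j: "int j + int (p (nat (int n - i))) < int n - i"
    if "stratum_at X n F i S" "i \<le> c" for i S
    using Suc.prems[OF that] by simp
  have "full_simplex X n F p j \<tau> \<longleftrightarrow>
        full_simplex (subtopology X (topspace X - F c)) n (\<lambda>i. (topspace X - F c) \<inter> F i) q j \<tau>"
    for \<tau>
    using deep_j by (rule Suc.IH)
  moreover have "allowable_simplex X n F p (Suc j) \<sigma> \<longleftrightarrow>
        allowable_simplex (subtopology X (topspace X - F c)) n (\<lambda>i. (topspace X - F c) \<inter> F i) q
          (Suc j) \<sigma>"
    using X assms(2) Suc.prems agree by (rule allowable_simplex_complement_iff)
  ultimately show ?case by simp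
qed

text \<open>For l_p = \<infinity> nothing is removed: F (-1) is empty.\<close>

definition cleaving_skeleton :: "nat \<Rightarrow> (nat \<Rightarrow> nat) \<Rightarrow> int" where
  "cleaving_skeleton n p = (case cleaving_point p of enat l \<Rightarrow> int n - int l - 1 | \<infinity> \<Rightarrow> -1)"

lemma cleaving_skeleton_less: "cleaving_skeleton n p < int n"
  by (cases "cleaving_point p") (auto simp: cleaving_skeleton_def)

lemma cleaving_skeleton_less_iff:
  assumes "0 \<le> i" "i \<le> int n"
  shows "cleaving_skeleton n p < i \<longleftrightarrow> enat (nat (int n - i)) \<le> cleaving_point p"
  using assms by (cases "cleaving_point p") (auto simp: cleaving_skeleton_def)

lemma cleaved_open_eq_complement:
  assumes "filtered_space X n F"
  shows "cleaved_open X n F p = topspace X - F (cleaving_skeleton n p)"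
proof (cases "cleaving_point p")
  case infinity
  have "F (-1) = {}" using assms unfolding filtered_space_def by simp
  then show ?thesis by (simp add: cleaved_open_def cleaving_skeleton_def infinity)
qed (simp add: cleaved_open_def cleaving_skeleton_def)

lemma stratum_at_le_cleaving_skeleton_bound:
  assumes "gm_perversity p" "no_codim_one_strata X n F"
    and S: "stratum_at X n F i S" "i \<le> cleaving_skeleton n p" and "j \<le> 2"
  shows "int j + int (p (nat (int n - i))) < int n - i"
proof -
  have range: "0 \<le> i" "i < int n"
    using S cleaving_skeleton_less[of n p] unfolding stratum_at_def by auto
  have two: "2 \<le> nat (int n - i)"
    using stratum_at_codim_ge_two[OF assms(2) S(1) range(2)] by linarith
  have "\<not> enat (nat (int n - i)) \<le> cleaving_point p"
    using cleaving_skeleton_less_iff[of i n p] range S(2) by simp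
  then have "p (nat (int n - i)) \<noteq> top_perversity (nat (int n - i))"
    using gm_perversity_eq_top_iff_le_cleaving_point[OF assms(1) two] by blast
  then have "p (nat (int n - i)) + 3 \<le> nat (int n - i)"
    by (rule gm_perversity_below_top[OF assms(1) two])
  then show ?thesis using \<open>j \<le> 2\<close> range by linarith
qed

lemma stratum_at_above_cleaving_skeleton_top:
  assumes "gm_perversity p" "no_codim_one_strata X n F"
    and S: "stratum_at X n F i S" "cleaving_skeleton n p < i" "i < int n"
  shows "top_perversity (nat (int n - i)) = p (nat (int n - i))"
proof -
  have two: "2 \<le> nat (int n - i)"
    using stratum_at_codim_ge_two[OF assms(2) S(1,3)] by linarith
  have "enat (nat (int n - i)) \<le> cleaving_point p"
    using cleaving_skeleton_less_iff[of i n p] S unfolding stratum_at_def by simp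
  then show ?thesis using gm_perversity_eq_top_iff_le_cleaving_point[OF assms(1) two] by simp
qed

lemma intersection_pi1_cong:
  assumes "full_simplex X n F p 1 = full_simplex X' n' F' p' 1"
    and "full_simplex X n F p 2 = full_simplex X' n' F' p' 2"
  shows "intersection_pi1 X n F p x0 = intersection_pi1 X' n' F' p' x0"
  unfolding intersection_pi1_def full_loop_class_def full_loop_def full_loop_rel_def assms ..

theorem mainTheorem9:
  fixes X :: "'a topology" and n :: nat and F :: "int \<Rightarrow> 'a set"
    and p :: "nat \<Rightarrow> nat" and x0 :: 'a
  assumes "filtered_space X n F"
    and "gm_perversity p"
    and "no_codim_one_strata X n F"
    and "regular_point X n F x0"
  shows "intersection_pi1 X n F p x0 \<cong>
         intersection_pi1 (subtopology X (cleaved_open X n F p)) n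
           (\<lambda>i. cleaved_open X n F p \<inter> F i) top_perversity x0"
proof -
  define c where "c = cleaving_skeleton n p"
  have full_eq: "full_simplex X n F p j =
      full_simplex (subtopology X (topspace X - F c)) n (\<lambda>i. (topspace X - F c) \<inter> F i)
        top_perversity j" if "j \<le> 2" for j
  proof (rule ext)
    fix \<sigma>
    show "full_simplex X n F p j \<sigma> = full_simplex (subtopology X (topspace X - F c)) n
            (\<lambda>i. (topspace X - F c) \<inter> F i) top_perversity j \<sigma>"
      using assms(1) cleaving_skeleton_less
        stratum_at_le_cleaving_skeleton_bound[OF assms(2,3) _ _ that]
        stratum_at_above_cleaving_skeleton_top[OF assms(2,3)]
      unfolding c_def by (rule full_simplex_complement_iff)
  qed
  have "intersection_pi1 X n F p x0 = intersection_pi1 (subtopology X (topspace X - F c)) n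
          (\<lambda>i. (topspace X - F c) \<inter> F i) top_perversity x0"
    by (rule intersection_pi1_cong; rule full_eq; simp)
  then show ?thesis unfolding c_def cleaved_open_eq_complement[OF assms(1)] by simp
qed

end
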